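(* Let $\Phi$ be a $(3,3)$-monotone formula with $n$ clauses and $n$ variables, and let $G_\Phi$ be the graph described in the context. If $\Phi$ is 1-satisfiable, then $\mathcal{F}(\overline{G_\Phi})=\{\frac{7}{3}n\}$; if $\Phi$ is not 1-satisfiable, then $\mathcal{F}(\overline{G_\Phi})=\emptyset$.
   Context: A $(3,3)$-monotone formula is a set $C$ of clauses over a variable set $X$, where each clause consists of three distinct positive variables and each variable occurs in exactly three clauses, so $|C|=|X|=n$. It is 1-satisfiable if some truth assignment makes exactly one variable of each clause true. The graph $G_\Phi$ has $5n$ vertices: for each clause $c$ with variables $x,y,z$ (in an arbitrary fixed order) there are vertices $c(x),c(y),c(z),a_1^c,a_2^c$ forming the path $c(x)\,a_1^c\,c(y)\,a_2^c\,c(z)$; for each variable $x$ occurring in clauses $c,c',c''$, the vertices $c(x),c'(x),c''(x)$ form a triangle; there are no other edges. $\overline{G}$ denotes the complement. A colouring is a map to $\mathbb{Z}^+$ with adjacent vertices receiving distinct colours; a fall $k$-colouring is a colouring with exactly $k$ colours in which every vertex is adjacent to a vertex of every colour other than its own; $\mathcal{F}(G)$ is the set of $k$ for which $G$ has a fall $k$-colouring. *)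

theory Defs
  imports Complex_Main
begin

definition monotone33 :: "'v set \<Rightarrow> 'v set set \<Rightarrow> bool" where
  "monotone33 X C \<longleftrightarrow> finite X \<and> (\<forall>c\<in>C. c \<subseteq> X \<and> card c = 3)
     \<and> (\<forall>x\<in>X. card {c\<in>C. x \<in> c} = 3)"

definition one_satisfiable :: "'v set \<Rightarrow> 'v set set \<Rightarrow> bool" where
  "one_satisfiable X C \<longleftrightarrow> (\<exists>T\<subseteq>X. \<forall>c\<in>C. card (c \<inter> T) = 1)"

definition clause_order :: "'v set set \<Rightarrow> ('v set \<Rightarrow> 'v list) \<Rightarrow> bool" where
  "clause_order C ord \<longleftrightarrow> (\<forall>c\<in>C. distinct (ord c) \<and> set (ord c) = c)"

datatype 'v gvert = CV "'v set" 'v | A1 "'v set" | A2 "'v set"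

definition GPhi_verts :: "'v set set \<Rightarrow> 'v gvert set" where
  "GPhi_verts C = {CV c x | c x. c \<in> C \<and> x \<in> c} \<union> A1 ` C \<union> A2 ` C"

definition GPhi_arc :: "'v set set \<Rightarrow> ('v set \<Rightarrow> 'v list) \<Rightarrow> 'v gvert \<Rightarrow> 'v gvert \<Rightarrow> bool" where
  "GPhi_arc C ord u w \<longleftrightarrow>
     (\<exists>c\<in>C. (u = CV c (ord c ! 0) \<and> w = A1 c) \<or> (u = A1 c \<and> w = CV c (ord c ! 1))
           \<or> (u = CV c (ord c ! 1) \<and> w = A2 c) \<or> (u = A2 c \<and> w = CV c (ord c ! 2)))
   \<or> (\<exists>x c c'. c \<in> C \<and> c' \<in> C \<and> c \<noteq> c' \<and> x \<in> c \<and> x \<in> c' \<and> u = CV c x \<and> w = CV c' x)"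

definition GPhi_adj :: "'v set set \<Rightarrow> ('v set \<Rightarrow> 'v list) \<Rightarrow> 'v gvert \<Rightarrow> 'v gvert \<Rightarrow> bool" where
  "GPhi_adj C ord u w \<longleftrightarrow> GPhi_arc C ord u w \<or> GPhi_arc C ord w u"

definition compl_adj :: "'a set \<Rightarrow> ('a \<Rightarrow> 'a \<Rightarrow> bool) \<Rightarrow> 'a \<Rightarrow> 'a \<Rightarrow> bool" where
  "compl_adj V E u w \<longleftrightarrow> u \<in> V \<and> w \<in> V \<and> u \<noteq> w \<and> \<not> E u w"

definition fall_colouring :: "'a set \<Rightarrow> ('a \<Rightarrow> 'a \<Rightarrow> bool) \<Rightarrow> ('a \<Rightarrow> nat) \<Rightarrow> nat \<Rightarrow> bool" where
  "fall_colouring V E f k \<longleftrightarrow>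
     (\<forall>v\<in>V. f v \<ge> 1)
   \<and> (\<forall>u\<in>V. \<forall>w\<in>V. E u w \<longrightarrow> f u \<noteq> f w)
   \<and> card (f ` V) = k
   \<and> (\<forall>v\<in>V. \<forall>j\<in>f ` V. j \<noteq> f v \<longrightarrow> (\<exists>u\<in>V. E v u \<and> f u = j))"

definition fall_spectrum :: "'a set \<Rightarrow> ('a \<Rightarrow> 'a \<Rightarrow> bool) \<Rightarrow> nat set" where
  "fall_spectrum V E = {k. \<exists>f. fall_colouring V E f k}"

end

theory Submission imports Defs begin

(* A fall colouring of the complement of a graph G is a partition of the vertices into cliques
   of G such that no vertex could join a class other than its own.  On a clause path
   x a1 y a2 z of G_Phi, a1 and a2 lie in different classes and each must share its class with
   one of its two path neighbours, so exactly one of x, y, z is "free".  A free copy of a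
   variable can only be completed by the other copies of that variable, which are therefore
   free in their clauses too; so the free variables form a 1-satisfying assignment T, and the
   classes are those of the a1's, of the a2's and one per variable of T.  Since every variable
   lies in three clauses, |T| = n/3 and there are 2n + n/3 = 7n/3 colours.  Conversely, a
   1-satisfying T gives such a partition: the copies of each true variable form a class, and
   the two false variables of each clause join a1 and a2 along the path. *)

lemma fall_colouring_compl_iff:
  "fall_colouring V (compl_adj V E) f k \<longleftrightarrow>
     (\<forall>v\<in>V. f v \<ge> 1) \<and> card (f ` V) = k
   \<and> (\<forall>u\<in>V. \<forall>w\<in>V. u \<noteq> w \<and> f u = f w \<longrightarrow> E u w)
   \<and> (\<forall>u\<in>V. \<forall>v\<in>V. f u \<noteq> f v \<longrightarrow> (\<exists>w\<in>V. f w = f u \<and> w \<noteq> v \<and> \<not> E v w))"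
  unfolding fall_colouring_def compl_adj_def by blast

lemma fall_colouring_compl_of_clique_partition:
  assumes "finite V"
    and clique: "\<And>u w. u \<in> V \<Longrightarrow> w \<in> V \<Longrightarrow> u \<noteq> w \<Longrightarrow> r u = r w \<Longrightarrow> E u w"
    and maximal: "\<And>u v. u \<in> V \<Longrightarrow> v \<in> V \<Longrightarrow> r u \<noteq> r v \<Longrightarrow>
                     \<exists>w\<in>V. r w = r u \<and> w \<noteq> v \<and> \<not> E v w"
  shows "\<exists>f. fall_colouring V (compl_adj V E) f (card (r ` V))"
proof -
  obtain h :: "'b \<Rightarrow> nat" where h: "inj_on h (r ` V)"
    using finite_imp_inj_to_nat_seg[of "r ` V"] \<open>finite V\<close> by blast
  define f where "f = Suc \<circ> h \<circ> r"
  have f_eq: "f u = f w \<longleftrightarrow> r u = r w" if "u \<in> V" "w \<in> V" for u w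
    using h that unfolding f_def inj_on_def by auto
  have "card (f ` V) = card (r ` V)"
  proof -
    have "f ` V = (Suc \<circ> h) ` (r ` V)" by (simp add: f_def image_comp)
    moreover have "inj_on (Suc \<circ> h) (r ` V)" using h by (simp add: inj_on_def)
    ultimately show ?thesis by (metis card_image)
  qed
  moreover have "\<forall>u\<in>V. \<forall>w\<in>V. u \<noteq> w \<and> f u = f w \<longrightarrow> E u w"
    using f_eq clique by blast
  moreover have "\<forall>u\<in>V. \<forall>v\<in>V. f u \<noteq> f v \<longrightarrow> (\<exists>w\<in>V. f w = f u \<and> w \<noteq> v \<and> \<not> E v w)"
    using f_eq maximal by metis
  ultimately have "fall_colouring V (compl_adj V E) f (card (r ` V))"
    unfolding fall_colouring_compl_iff by (simp add: f_def)
  then show ?thesis by blast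
qed

lemma fall_colouring_compl_same_colour_adj:
  assumes "fall_colouring V (compl_adj V E) f k" "u \<in> V" "w \<in> V" "u \<noteq> w" "f u = f w"
  shows "E u w"
  using assms unfolding fall_colouring_compl_iff by simp

lemma fall_colouring_compl_maximal:
  assumes "fall_colouring V (compl_adj V E) f k" "u \<in> V" "v \<in> V" "f u \<noteq> f v"
  obtains w where "w \<in> V" "f w = f u" "w \<noteq> v" "\<not> E v w"
proof -
  have "\<exists>w\<in>V. f w = f u \<and> w \<noteq> v \<and> \<not> E v w"
    using assms unfolding fall_colouring_compl_iff by simp
  then show thesis using that by blast
qed

lemma fall_colouring_compl_colour_of_neighbour:
  assumes fall: "fall_colouring V (compl_adj V E) f k"
    and "a \<in> V" "b \<in> V" "E b a" and nbhd: "\<And>w. w \<in> V \<Longrightarrow> E a w \<Longrightarrow> w = b \<or> w = b'"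
  shows "f a = f b \<or> f a = f b'"
proof (rule ccontr)
  assume ne: "\<not> ?thesis"
  then have "f a \<noteq> f b" by simp
  then obtain w where w: "w \<in> V" "f w = f a" "w \<noteq> b" "\<not> E b w"
    by (rule fall_colouring_compl_maximal[OF fall \<open>a \<in> V\<close> \<open>b \<in> V\<close>])
  have "w \<noteq> a" using w(4) \<open>E b a\<close> by auto
  then have "E a w"
    using fall_colouring_compl_same_colour_adj[OF fall \<open>a \<in> V\<close> w(1)] w(2) by simp
  then have "w = b'" using nbhd[OF w(1)] w(3) by simp
  then show False using w(2) ne by simp
qed

locale GPhi =
  fixes X :: "'v set" and C :: "'v set set" and ord :: "'v set \<Rightarrow> 'v list"
  assumes monotone33: "monotone33 X C" and clause_order: "clause_order C ord"
begin

abbreviation "V \<equiv> GPhi_verts C"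
abbreviation "E \<equiv> GPhi_adj C ord"
abbreviation "var0 c \<equiv> ord c ! 0"
abbreviation "var1 c \<equiv> ord c ! 1"
abbreviation "var2 c \<equiv> ord c ! 2"

lemma finite_X: "finite X"
  using monotone33 by (simp add: monotone33_def)

lemma clause_subset: "c \<in> C \<Longrightarrow> c \<subseteq> X"
  using monotone33 by (simp add: monotone33_def)

lemma finite_C: "finite C"
  using finite_X clause_subset by (meson Pow_iff finite_Pow_iff rev_finite_subset subsetI)

lemma finite_clause: "c \<in> C \<Longrightarrow> finite c"
  using finite_X clause_subset by (meson rev_finite_subset)

lemma card_clauses_containing: "x \<in> X \<Longrightarrow> card {c \<in> C. x \<in> c} = 3"
  using monotone33 by (simp add: monotone33_def)

lemma clause_eq:
  assumes "c \<in> C"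
  shows "c = {var0 c, var1 c, var2 c} \<and> var0 c \<noteq> var1 c \<and> var0 c \<noteq> var2 c \<and> var1 c \<noteq> var2 c"
proof -
  have d: "distinct (ord c)" and s: "set (ord c) = c"
    using clause_order assms by (auto simp: clause_order_def)
  have "length (ord c) = 3"
    using distinct_card[OF d] s monotone33 assms by (simp add: monotone33_def)
  then obtain a b e where "ord c = [a, b, e]"
    by (auto simp: numeral_3_eq_3 length_Suc_conv)
  then show ?thesis using d s by auto
qed

lemma clause_var_cases: "c \<in> C \<Longrightarrow> x \<in> c \<Longrightarrow> x = var0 c \<or> x = var1 c \<or> x = var2 c"
  using clause_eq by blast

lemma exists_other_clause:
  assumes "x \<in> X"
  obtains d where "d \<in> C" "x \<in> d" "d \<noteq> c"
proof -
  have "\<not> {d \<in> C. x \<in> d} \<subseteq> {c}"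
    using card_mono[of "{c}" "{d \<in> C. x \<in> d}"] card_clauses_containing[OF assms] by auto
  then show thesis using that by blast
qed

definition some_clause :: "'v \<Rightarrow> 'v set" where
  "some_clause x = (SOME c. c \<in> C \<and> x \<in> c)"

lemma some_clause_mem: "x \<in> X \<Longrightarrow> some_clause x \<in> C \<and> x \<in> some_clause x"
  unfolding some_clause_def by (rule someI_ex) (metis exists_other_clause)

lemma mem_V [simp]:
  "CV c x \<in> V \<longleftrightarrow> c \<in> C \<and> x \<in> c"  "A1 c \<in> V \<longleftrightarrow> c \<in> C"  "A2 c \<in> V \<longleftrightarrow> c \<in> C"
  by (auto simp: GPhi_verts_def)

lemma V_cases [consumes 1, case_names CV A1 A2]:
  assumes "v \<in> V"
  obtains c x where "v = CV c x" "c \<in> C" "x \<in> c" | c where "v = A1 c" "c \<in> C"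
    | c where "v = A2 c" "c \<in> C"
  using assms by (cases v) auto

lemma finite_V: "finite V"
proof -
  have "V = case_prod CV ` (SIGMA c:C. c) \<union> A1 ` C \<union> A2 ` C"
    unfolding GPhi_verts_def by auto
  then show ?thesis using finite_C finite_clause by simp
qed

lemma adj_simps [simp]:
  "E (A1 c) w \<longleftrightarrow> c \<in> C \<and> (w = CV c (var0 c) \<or> w = CV c (var1 c))"
  "E (A2 c) w \<longleftrightarrow> c \<in> C \<and> (w = CV c (var1 c) \<or> w = CV c (var2 c))"
  "E (CV d x) (A1 c) \<longleftrightarrow> c \<in> C \<and> d = c \<and> (x = var0 c \<or> x = var1 c)"
  "E (CV d x) (A2 c) \<longleftrightarrow> c \<in> C \<and> d = c \<and> (x = var1 c \<or> x = var2 c)"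
  "E (CV c x) (CV d y) \<longleftrightarrow> x = y \<and> c \<noteq> d \<and> c \<in> C \<and> d \<in> C \<and> x \<in> c \<and> x \<in> d"
  by (auto simp: GPhi_adj_def GPhi_arc_def)

end

locale GPhi_fall_colouring = GPhi X C ord for X :: "'v set" and C and ord +
  fixes f :: "'v gvert \<Rightarrow> nat" and k :: nat
  assumes fall: "fall_colouring (GPhi_verts C) (compl_adj (GPhi_verts C) (GPhi_adj C ord)) f k"
begin

lemma same_colour_adj: "u \<in> V \<Longrightarrow> w \<in> V \<Longrightarrow> u \<noteq> w \<Longrightarrow> f u = f w \<Longrightarrow> E u w"
  by (rule fall_colouring_compl_same_colour_adj[OF fall])

definition free :: "'v set \<Rightarrow> 'v \<Rightarrow> bool" where
  "free c x \<longleftrightarrow> f (CV c x) \<noteq> f (A1 c) \<and> f (CV c x) \<noteq> f (A2 c)"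

lemma free_unique:
  assumes c: "c \<in> C"
  shows "\<exists>!x. x \<in> c \<and> free c x"
proof -
  have c_eq: "c = {var0 c, var1 c, var2 c}" and distinct_vars:
    "var0 c \<noteq> var1 c" "var0 c \<noteq> var2 c" "var1 c \<noteq> var2 c"
    using clause_eq[OF c] by auto
  have "f (A1 c) = f (CV c (var0 c)) \<or> f (A1 c) = f (CV c (var1 c))"
    using c c_eq by (intro fall_colouring_compl_colour_of_neighbour[OF fall]) auto
  moreover have "f (A2 c) = f (CV c (var2 c)) \<or> f (A2 c) = f (CV c (var1 c))"
    using c c_eq by (intro fall_colouring_compl_colour_of_neighbour[OF fall]) auto
  moreover have "f (A1 c) \<noteq> f (A2 c)"
    using same_colour_adj[of "A1 c" "A2 c"] c by auto
  moreover have "f (CV c x) \<noteq> f (CV c y)" if "x \<in> c" "y \<in> c" "x \<noteq> y" for x y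
    using same_colour_adj[of "CV c x" "CV c y"] c that by auto
  ultimately show ?thesis
    using distinct_vars c_eq unfolding free_def by (smt (verit) empty_iff insert_iff)
qed

lemma free_colour_shared:
  assumes free: "free c' x" and c': "c' \<in> C" "x \<in> c'" and c: "c \<in> C" "x \<in> c"
  shows "f (CV c x) = f (CV c' x)"
proof (rule ccontr)
  assume ne: "f (CV c x) \<noteq> f (CV c' x)"
  then have "c \<noteq> c'" by auto
  obtain w where w: "w \<in> V" "f w = f (CV c' x)" "w \<noteq> CV c x" "\<not> E (CV c x) w"
    using fall_colouring_compl_maximal[OF fall, of "CV c' x" "CV c x"] ne c c' by auto
  have "w \<noteq> CV c' x" using w(4) \<open>c \<noteq> c'\<close> c c' by auto
  then have adj: "E (CV c' x) w" using same_colour_adj[of "CV c' x" w] w c' by auto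
  from w(1) show False
  proof (cases rule: V_cases)
    case (CV d y)
    then show ?thesis using adj w(3,4) c by auto
  next
    case (A1 d)
    then show ?thesis using adj w(2) free unfolding free_def by auto
  next
    case (A2 d)
    then show ?thesis using adj w(2) free unfolding free_def by auto
  qed
qed

definition free_vars :: "'v set" where
  "free_vars = {x \<in> X. \<exists>c\<in>C. x \<in> c \<and> free c x}"

lemma free_vars_subset: "free_vars \<subseteq> X"
  unfolding free_vars_def by auto

lemma free_in_every_clause:
  assumes x: "x \<in> free_vars" and c: "c \<in> C" "x \<in> c"
  shows "free c x"
proof -
  obtain c' where c': "c' \<in> C" "x \<in> c'" "free c' x"
    using x unfolding free_vars_def by auto
  have same: "f (CV c x) = f (CV c' x)" by (rule free_colour_shared[OF c'(3,1,2) c])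
  show ?thesis
    using same_colour_adj[of "CV c' x" "A1 c"] same_colour_adj[of "CV c' x" "A2 c"] same c c'
    unfolding free_def by auto
qed

lemma clause_inter_free_vars:
  assumes c: "c \<in> C"
  shows "card (c \<inter> free_vars) = 1"
proof -
  obtain x where x: "x \<in> c" "free c x" and unique: "\<And>y. y \<in> c \<Longrightarrow> free c y \<Longrightarrow> y = x"
    using free_unique[OF c] by auto
  have "c \<inter> free_vars = {x}"
    using x unique free_in_every_clause c clause_subset unfolding free_vars_def by blast
  then show ?thesis by simp
qed

definition representatives :: "'v gvert set" where
  "representatives = A1 ` C \<union> A2 ` C \<union> (\<lambda>x. CV (some_clause x) x) ` free_vars"

lemma representative_free:
  "x \<in> free_vars \<Longrightarrow> CV (some_clause x) x \<in> V \<and> free (some_clause x) x"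
  using some_clause_mem free_vars_subset free_in_every_clause by auto

lemma representatives_subset: "representatives \<subseteq> V"
  using representative_free unfolding representatives_def by auto

lemma colours_representatives: "f ` V = f ` representatives"
proof
  show "f ` V \<subseteq> f ` representatives"
  proof
    fix j assume "j \<in> f ` V"
    then obtain v where v: "v \<in> V" "j = f v" by auto
    from v(1) show "j \<in> f ` representatives"
    proof (cases rule: V_cases)
      case (CV c x)
      show ?thesis
      proof (cases "free c x")
        case True
        then have "x \<in> free_vars" using CV clause_subset unfolding free_vars_def by auto
        then have "f v = f (CV (some_clause x) x)"
          using CV free_colour_shared representative_free some_clause_mem free_vars_subset by blast
        then show ?thesis using v \<open>x \<in> free_vars\<close> unfolding representatives_def by blast
      next
        case False
        then show ?thesis using v CV unfolding free_def representatives_def by auto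
      qed
    qed (use v in \<open>auto simp: representatives_def\<close>)
  qed
  show "f ` representatives \<subseteq> f ` V"
    using representatives_subset by blast
qed

lemma inj_on_representatives: "inj_on f representatives"
proof (rule inj_onI, rule ccontr)
  fix u w assume uw: "u \<in> representatives" "w \<in> representatives" "f u = f w" "u \<noteq> w"
  then have "E u w" using same_colour_adj representatives_subset by blast
  with uw show False
    unfolding representatives_def by (auto dest!: representative_free simp: free_def)
qed

lemma card_representatives: "card representatives = 2 * card C + card free_vars"
proof -
  have "finite free_vars" using free_vars_subset finite_X by (rule finite_subset)
  moreover have "inj_on (\<lambda>x. CV (some_clause x) x) free_vars" by (rule inj_onI) simp
  ultimately show ?thesis
    unfolding representatives_def using finite_C
    by (subst card_Un_disjoint; auto simp: card_image inj_on_def)+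
qed

lemma formula_one_satisfiable: "one_satisfiable X C"
  unfolding one_satisfiable_def using free_vars_subset clause_inter_free_vars by blast

lemma number_of_colours: "3 * k = 7 * card C"
proof -
  have "card C = (\<Sum>c\<in>C. card {x \<in> free_vars. x \<in> c})"
    using clause_inter_free_vars by (simp add: Int_def conj_commute)
  also have "\<dots> = 3 * card free_vars"
    using finite_C finite_X free_vars_subset card_clauses_containing
    by (intro sum_multicount) (auto intro: finite_subset)
  finally have "card C = 3 * card free_vars" .
  moreover have "k = card (f ` V)"
    using fall unfolding fall_colouring_def by simp
  ultimately show ?thesis
    using colours_representatives inj_on_representatives card_representatives
    by (simp add: card_image)
qed

end

datatype 'v colour_class = Class_A1 "'v set" | Class_A2 "'v set" | Class_var 'v

locale GPhi_one_satisfying = GPhi X C ord for X :: "'v set" and C and ord +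
  fixes T :: "'v set"
  assumes T_subset: "T \<subseteq> X" and card_clause_inter_T: "\<And>c. c \<in> C \<Longrightarrow> card (c \<inter> T) = 1"
begin

lemma clause_T_cases:
  assumes c: "c \<in> C"
  shows "var0 c \<in> T \<and> var1 c \<notin> T \<and> var2 c \<notin> T \<or> var0 c \<notin> T \<and> var1 c \<in> T \<and> var2 c \<notin> T
       \<or> var0 c \<notin> T \<and> var1 c \<notin> T \<and> var2 c \<in> T"
proof -
  obtain z where z: "c \<inter> T = {z}"
    using card_clause_inter_T[OF c] by (rule card_1_singletonE)
  have c_eq: "c = {var0 c, var1 c, var2 c}" and "var0 c \<noteq> var1 c" "var0 c \<noteq> var2 c" "var1 c \<noteq> var2 c"
    using clause_eq[OF c] by auto
  moreover have "y \<in> T \<longleftrightarrow> y = z" if "y \<in> c" for y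
    using z that by blast
  moreover have "z \<in> c" using z by blast
  ultimately show ?thesis by (metis insertCI insertE singletonD)
qed

(* Along the path x a1 y a2 z, the middle variable y joins a1 exactly when x is the true one. *)
primrec colour_class :: "'v gvert \<Rightarrow> 'v colour_class" where
  "colour_class (CV c x) =
     (if x \<in> T then Class_var x
      else if x = var0 c \<or> x = var1 c \<and> var0 c \<in> T then Class_A1 c else Class_A2 c)"
| "colour_class (A1 c) = Class_A1 c"
| "colour_class (A2 c) = Class_A2 c"

lemma colour_class_inj_on_clause:
  assumes c: "c \<in> C" and "x \<in> c" "y \<in> c" "x \<notin> T" "y \<notin> T"
    and "colour_class (CV c x) = colour_class (CV c y)"
  shows "x = y"
  using assms clause_eq[OF c] clause_T_cases[OF c] by (auto split: if_splits)

lemma colour_class_adj: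
  assumes "u \<in> V" "w \<in> V" "u \<noteq> w" "colour_class u = colour_class w"
  shows "E u w"
  using assms clause_eq colour_class_inj_on_clause
  by (cases u; cases w) (auto split: if_splits dest: clause_var_cases)

lemma colour_class_maximal:
  assumes u: "u \<in> V" and v: "v \<in> V" and ne: "colour_class u \<noteq> colour_class v"
  shows "\<exists>w\<in>V. colour_class w = colour_class u \<and> w \<noteq> v \<and> \<not> E v w"
proof -
  have A1: "\<exists>w\<in>V. colour_class w = Class_A1 c \<and> w \<noteq> v \<and> \<not> E v w"
    if c: "c \<in> C" and ne: "Class_A1 c \<noteq> colour_class v" for c
  proof (cases "E v (A1 c)")
    case True
    define q where "q = (if var0 c \<in> T then var1 c else var0 c)"
    have "q \<in> c" "colour_class (CV c q) = Class_A1 c"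
      using clause_eq[OF c] clause_T_cases[OF c] unfolding q_def by auto
    then show ?thesis using True ne v c by (cases v) (auto intro!: bexI[of _ "CV c q"])
  next
    case False
    then show ?thesis using ne c by (intro bexI[of _ "A1 c"]) auto
  qed
  have A2: "\<exists>w\<in>V. colour_class w = Class_A2 c \<and> w \<noteq> v \<and> \<not> E v w"
    if c: "c \<in> C" and ne: "Class_A2 c \<noteq> colour_class v" for c
  proof (cases "E v (A2 c)")
    case True
    define q where "q = (if var2 c \<in> T then var1 c else var2 c)"
    have "q \<in> c" "colour_class (CV c q) = Class_A2 c"
      using clause_eq[OF c] clause_T_cases[OF c] unfolding q_def by auto
    then show ?thesis using True ne v c by (cases v) (auto intro!: bexI[of _ "CV c q"])
  next
    case False
    then show ?thesis using ne c by (intro bexI[of _ "A2 c"]) auto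
  qed
  have var: "\<exists>w\<in>V. colour_class w = Class_var x \<and> w \<noteq> v \<and> \<not> E v w"
    if c: "c \<in> C" "x \<in> c" and x: "x \<in> T" and ne: "Class_var x \<noteq> colour_class v" for c x
    using v
  proof (cases rule: V_cases)
    case (CV d y)
    then show ?thesis using c x ne by (intro bexI[of _ "CV c x"]) auto
  next
    case (A1 d)
    obtain d' where "d' \<in> C" "x \<in> d'" "d' \<noteq> d"
      using exists_other_clause x T_subset by blast
    then show ?thesis using A1 x by (intro bexI[of _ "CV d' x"]) auto
  next
    case (A2 d)
    obtain d' where "d' \<in> C" "x \<in> d'" "d' \<noteq> d"
      using exists_other_clause x T_subset by blast
    then show ?thesis using A2 x by (intro bexI[of _ "CV d' x"]) auto
  qed
  from u show ?thesis
  proof (cases rule: V_cases)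
    case (CV c x)
    then show ?thesis using A1 A2 var ne by auto
  qed (use A1 A2 ne in auto)
qed

lemma fall_colouring_exists: "\<exists>f. fall_colouring V (compl_adj V E) f (card (colour_class ` V))"
  using finite_V colour_class_adj colour_class_maximal by (rule fall_colouring_compl_of_clique_partition)

end

theorem mainTheorem20:
  fixes X :: "'v set" and C :: "'v set set" and ord :: "'v set \<Rightarrow> 'v list" and n :: nat
  assumes "monotone33 X C"
    and "card C = n" and "card X = n"
    and "clause_order C ord"
  shows "(one_satisfiable X C \<longrightarrow>
            real ` fall_spectrum (GPhi_verts C) (compl_adj (GPhi_verts C) (GPhi_adj C ord))
              = {7 * real n / 3})
       \<and> (\<not> one_satisfiable X C \<longrightarrow>
            fall_spectrum (GPhi_verts C) (compl_adj (GPhi_verts C) (GPhi_adj C ord)) = {})"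
proof -
  interpret GPhi X C ord using assms(1,4) by unfold_locales
  let ?S = "fall_spectrum V (compl_adj V E)"
  have spectrum: "one_satisfiable X C \<and> real k = 7 * real n / 3" if k: "k \<in> ?S" for k
  proof -
    obtain f where "fall_colouring V (compl_adj V E) f k"
      using k unfolding fall_spectrum_def by blast
    then interpret GPhi_fall_colouring X C ord f k by unfold_locales
    have "real (3 * k) = real (7 * n)" using number_of_colours assms(2) by simp
    then show ?thesis using formula_one_satisfiable by simp
  qed
  have nonempty: "?S \<noteq> {}" if sat: "one_satisfiable X C"
  proof -
    obtain T where "T \<subseteq> X" "\<forall>c\<in>C. card (c \<inter> T) = 1"
      using sat unfolding one_satisfiable_def by blast
    then interpret GPhi_one_satisfying X C ord T by unfold_locales blast+
    show ?thesis using fall_colouring_exists unfolding fall_spectrum_def by blast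
  qed
  show ?thesis
  proof (intro conjI impI)
    assume "one_satisfiable X C"
    moreover have "real ` ?S = (\<lambda>_. 7 * real n / 3) ` ?S"
      using spectrum by (intro image_cong) auto
    ultimately show "real ` ?S = {7 * real n / 3}"
      using nonempty by (simp add: image_constant_conv)
  next
    assume "\<not> one_satisfiable X C"
    then show "?S = {}" using spectrum by blast
  qed
qed

end
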